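(* Suppose $P$ is a transition kernel on finite $\mathcal{S}$ with actions $\mathcal{A}$, $\mathcal{K}=\{(s_k,a_k)\}_{k=1}^K$, and coefficients $\lambda_k^{s,a}\ge0$ with $\sum_k\lambda_k^{s,a}=1$ satisfy $P(\cdot|s,a)=\sum_{k}\lambda_k^{s,a}P(\cdot|s_k,a_k)$ for all $(s,a)$. Then for every $V:\mathcal{S}\to\mathbb{R}$ and every $(s,a)$, $$\sum_{k=1}^K\lambda_k^{s,a}\sqrt{\mathrm{Var}_{s_k,a_k}(V)}\le\sqrt{\mathrm{Var}_{s,a}(V)}.$$
   Context: $\mathrm{Var}_{s,a}(V)=\sum_{s'}P(s'|s,a)V(s')^2-\big(\sum_{s'}P(s'|s,a)V(s')\big)^2$. (In the paper this arises from a linear transition model $P=\Phi\Psi$ with features satisfying the anchor-state assumption, in which case $P(\cdot|s,a)=\sum_k\lambda_k^{s,a}P(\cdot|s_k,a_k)$ with the convex anchor coefficients.) *)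

theory Defs
  imports Main Complex_Main
begin

definition transition_kernel :: "('s::finite \<Rightarrow> 'a \<Rightarrow> 's \<Rightarrow> real) \<Rightarrow> bool" where
  "transition_kernel P \<longleftrightarrow> (\<forall>s a s'. P s a s' \<ge> 0) \<and> (\<forall>s a. (\<Sum>s'\<in>UNIV. P s a s') = 1)"

definition Var_sa :: "('s::finite \<Rightarrow> 'a \<Rightarrow> 's \<Rightarrow> real) \<Rightarrow> 's \<Rightarrow> 'a \<Rightarrow> ('s \<Rightarrow> real) \<Rightarrow> real" where
  "Var_sa P s a V = (\<Sum>s'\<in>UNIV. P s a s' * (V s')\<^sup>2) - (\<Sum>s'\<in>UNIV. P s a s' * V s')\<^sup>2"

end

theory Submission
  imports Defs
begin

text \<open>The variance of a mixture of distributions is at least the mixture of their variances: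
  the second moments mix linearly, while the squared mean of the mixture is at most the mixture
  of the squared means (Jensen). Since the square root is concave, the same Jensen inequality
  then moves the square root outside the weighted sum.\<close>

lemma weighted_mean_square_le:
  fixes w x :: "'i \<Rightarrow> real"
  assumes "finite A" "\<And>i. i \<in> A \<Longrightarrow> w i \<ge> 0" "(\<Sum>i\<in>A. w i) = 1"
  shows "(\<Sum>i\<in>A. w i * x i)\<^sup>2 \<le> (\<Sum>i\<in>A. w i * (x i)\<^sup>2)"
proof -
  define m where "m = (\<Sum>i\<in>A. w i * x i)"
  have "0 \<le> (\<Sum>i\<in>A. w i * (x i - m)\<^sup>2)"
    by (rule sum_nonneg) (simp add: assms(2))
  also have "\<dots> = (\<Sum>i\<in>A. w i * (x i)\<^sup>2 - 2 * m * (w i * x i) + m\<^sup>2 * w i)"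
    by (rule sum.cong) (auto simp: power2_eq_square algebra_simps)
  also have "\<dots> = (\<Sum>i\<in>A. w i * (x i)\<^sup>2) - 2 * m * m + m\<^sup>2"
    by (simp add: sum.distrib sum_subtractf sum_distrib_left[symmetric] assms(3) m_def)
  finally show ?thesis unfolding m_def by (simp add: power2_eq_square)
qed

lemma weighted_sum_sqrt_le_sqrt_weighted_sum:
  fixes w v :: "'i \<Rightarrow> real"
  assumes "finite A" "\<And>i. i \<in> A \<Longrightarrow> w i \<ge> 0" "(\<Sum>i\<in>A. w i) = 1"
    and "\<And>i. i \<in> A \<Longrightarrow> v i \<ge> 0"
  shows "(\<Sum>i\<in>A. w i * sqrt (v i)) \<le> sqrt (\<Sum>i\<in>A. w i * v i)"
proof -
  have "(\<Sum>i\<in>A. w i * sqrt (v i))\<^sup>2 \<le> (\<Sum>i\<in>A. w i * (sqrt (v i))\<^sup>2)"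
    using assms(1-3) by (rule weighted_mean_square_le)
  also have "\<dots> = (\<Sum>i\<in>A. w i * v i)"
    using assms(4) by simp
  finally show ?thesis
    by (rule real_le_rsqrt)
qed

lemma Var_sa_nonneg:
  assumes "transition_kernel P"
  shows "Var_sa P s a V \<ge> 0"
proof -
  have "(\<Sum>s'\<in>UNIV. P s a s' * V s')\<^sup>2 \<le> (\<Sum>s'\<in>UNIV. P s a s' * (V s')\<^sup>2)"
    using assms by (intro weighted_mean_square_le) (auto simp: transition_kernel_def)
  then show ?thesis
    unfolding Var_sa_def by simp
qed

lemma Var_sa_mixture_ge:
  fixes P :: "'s::finite \<Rightarrow> 'a \<Rightarrow> 's \<Rightarrow> real"
    and w :: "'i \<Rightarrow> real" and sk :: "'i \<Rightarrow> 's" and ak :: "'i \<Rightarrow> 'a"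
  assumes "finite I" "\<And>k. k \<in> I \<Longrightarrow> w k \<ge> 0" "(\<Sum>k\<in>I. w k) = 1"
    and mixture: "\<And>s'. P s a s' = (\<Sum>k\<in>I. w k * P (sk k) (ak k) s')"
  shows "(\<Sum>k\<in>I. w k * Var_sa P (sk k) (ak k) V) \<le> Var_sa P s a V"
proof -
  define mean where "mean k = (\<Sum>s'\<in>UNIV. P (sk k) (ak k) s' * V s')" for k
  define moment2 where "moment2 k = (\<Sum>s'\<in>UNIV. P (sk k) (ak k) s' * (V s')\<^sup>2)" for k
  have "(\<Sum>s'\<in>UNIV. P s a s' * V s') = (\<Sum>k\<in>I. w k * mean k)"
    unfolding mean_def mixture
    by (simp add: sum_distrib_left sum_distrib_right sum.swap[of _ UNIV] mult.assoc)
  moreover have "(\<Sum>s'\<in>UNIV. P s a s' * (V s')\<^sup>2) = (\<Sum>k\<in>I. w k * moment2 k)"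
    unfolding moment2_def mixture
    by (simp add: sum_distrib_left sum_distrib_right sum.swap[of _ UNIV] mult.assoc)
  ultimately have Var_mixture:
    "Var_sa P s a V = (\<Sum>k\<in>I. w k * moment2 k) - (\<Sum>k\<in>I. w k * mean k)\<^sup>2"
    unfolding Var_sa_def by simp
  have "(\<Sum>k\<in>I. w k * Var_sa P (sk k) (ak k) V)
      = (\<Sum>k\<in>I. w k * moment2 k) - (\<Sum>k\<in>I. w k * (mean k)\<^sup>2)"
    by (simp add: Var_sa_def mean_def moment2_def right_diff_distrib sum_subtractf)
  moreover have "(\<Sum>k\<in>I. w k * mean k)\<^sup>2 \<le> (\<Sum>k\<in>I. w k * (mean k)\<^sup>2)"
    using assms(1-3) by (rule weighted_mean_square_le)
  ultimately show ?thesis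
    unfolding Var_mixture by linarith
qed

theorem lemma3:
  fixes P :: "'s::finite \<Rightarrow> 'a \<Rightarrow> 's \<Rightarrow> real"
    and K :: nat
    and sk :: "nat \<Rightarrow> 's" and ak :: "nat \<Rightarrow> 'a"
    and lam :: "'s \<Rightarrow> 'a \<Rightarrow> nat \<Rightarrow> real"
    and V :: "'s \<Rightarrow> real" and s :: 's and a :: 'a
  assumes "transition_kernel P"
    and "\<And>s a k. k \<in> {1..K} \<Longrightarrow> lam s a k \<ge> 0"
    and "\<And>s a. (\<Sum>k=1..K. lam s a k) = 1"
    and "\<And>s a s'. P s a s' = (\<Sum>k=1..K. lam s a k * P (sk k) (ak k) s')"
  shows "(\<Sum>k=1..K. lam s a k * sqrt (Var_sa P (sk k) (ak k) V)) \<le> sqrt (Var_sa P s a V)"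
proof -
  have "(\<Sum>k=1..K. lam s a k * sqrt (Var_sa P (sk k) (ak k) V))
      \<le> sqrt (\<Sum>k=1..K. lam s a k * Var_sa P (sk k) (ak k) V)"
    using assms(2,3) Var_sa_nonneg[OF assms(1)]
    by (intro weighted_sum_sqrt_le_sqrt_weighted_sum) auto
  also have "\<dots> \<le> sqrt (Var_sa P s a V)"
    using assms(2,3) assms(4)[of s a] by (intro real_sqrt_le_mono Var_sa_mixture_ge) auto
  finally show ?thesis .
qed

end
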